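(* Fix $n\ge0$. For every formula $\phi\in\mathcal{L}^1$ and every label $w$, the computation of $\mathtt{Prove_n}(w:\phi)$ terminates.
   Context: Single-agent setting: $Ag=\{1\}$. Formulas $\phi ::= p \mid \overline{p} \mid (\phi\wedge\phi) \mid (\phi\vee\phi) \mid \Box\phi \mid \Diamond\phi \mid [1]\phi \mid \langle 1\rangle\phi$; $\overline{\phi}$ swaps $p/\overline{p}$, $\wedge/\vee$, $\Box/\Diamond$, $[1]/\langle 1\rangle$. A labelled sequent $\mathcal{R},\Gamma$ consists of relational atoms $\mathcal{R}_1xy$ and labelled formulas $x:\phi$. Graphs. $G(\Lambda)$ has the labels of $\Lambda$ as vertices and an edge $(x,y)$ for each $\mathcal{R}_1xy\in\Lambda$. A tree is a graph with a root having exactly one directed path to every other node; a forest is a disjoint union of trees. $\Lambda$ is forestlike iff $G(\Lambda)$ is a forest; its trees are choice-trees; $CT(w)$ is the choice-tree containing $w$. For forestlike $\Lambda$ and label $w$: $w$ is saturated iff (i) $w:\phi\in\Lambda$ implies $w:\overline{\phi}\notin\Lambda$, (ii) $w:\phi\vee\psi\in\Lambda$ implies $w:\phi,w:\psi\in\Lambda$, (iii) $w:\phi\wedge\psi\in\Lambda$ implies $w:\phi\in\Lambda$ or $w:\psi\in\Lambda$. $w$ is $\Box$-realized iff for each $w:\Box\phi\in\Lambda$ some label $u$ has $u:\phi\in\Lambda$; $[1]$-realized iff for each $w:[1]\phi\in\Lambda$ some $u\in CT(w)$ has $u:\phi\in\Lambda$; $\Diamond$-propagated iff for each $w:\Diamond\phi\in\Lambda$,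 $u:\phi\in\Lambda$ for all labels $u$; $\langle1\rangle$-propagated iff for each $w:\langle1\rangle\phi\in\Lambda$, $u:\phi\in\Lambda$ for all $u\in CT(w)$. $\Lambda$ is $n$-choice consistent ($n>0$) iff $G(\Lambda)$ has at most $n$ choice-trees. $\Lambda$ is stable iff all labels are saturated, $\Box$- and $[1]$-realized, $\Diamond$- and $\langle1\rangle$-propagated, and (when $n>0$) $\Lambda$ is $n$-choice consistent. Algorithm $\mathtt{Prove_n}(\mathcal{R},\Gamma)$, steps tried in order: 1. If $w:p$ and $w:\overline{p}$ are both present, return true. 2. If the sequent is stable, return false. 3. If some $w$ is not saturated: (i) if $w:\phi\vee\psi$ is present but $w:\phi$ or $w:\psi$ absent, return $\mathtt{Prove_n}(\mathcal{R},w:\phi,w:\psi,\Gamma)$; (ii) if $w:\phi\wedge\psi$ is present but neither $w:\phi$ nor $w:\psi$, return false if $\mathtt{Prove_n}(\mathcal{R},w:\phi,\Gamma)$ or $\mathtt{Prove_n}(\mathcal{R},w:\psi,\Gamma)$ returns false, else true. 4. If some $w:\langle1\rangle\phi$ is present and some $u\in CT(w)$ has $u:\phi$ absent, return $\mathtt{Prove_n}(\mathcal{R},u:\phi,\Gamma)$. 5. If some $w:\Diamond\phi$ is present and some label $u$ has $u:\phi$ absent, return $\mathtt{Prove_n}(\mathcal{R},u:\phi,\Gamma)$. 6. If some $w:[1]\phi$ is present with $u:\phi$ absent for all $u\in CT(w)$, return $\mathtt{Prove_n}(\mathcal{R},\mathcal{R}_1wv,v:\phi,\Gamma)$, $v$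 fresh. 7. If some $w:\Box\phi$ is present with $u:\phi$ absent for all labels $u$, return $\mathtt{Prove_n}(\mathcal{R},v:\phi,\Gamma)$, $v$ fresh. 8. (Only when $n>0$.) If not $n$-choice consistent, pick distinct choice-tree roots $w_0,\dots,w_n$ and return false if $\mathtt{Prove_n}(\mathcal{R},\mathcal{R}_1w_kw_j,\Gamma)$ returns false for some $0\le k\le n-1$, $k+1\le j\le n$, else true. For $n=0$ step 8 is absent and stability omits $n$-choice consistency. *)

theory Defs
  imports Main
begin

text \<open>Formulas of the single-agent language L^1 in negation normal form.
  Stit a = [1]a, DStit a = <1>a.\<close>
datatype 'a fm =
    Atom 'a | NAtom 'a
  | Conj "'a fm" "'a fm" | Disj "'a fm" "'a fm"
  | Box "'a fm" | Dia "'a fm"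
  | Stit "'a fm" | DStit "'a fm"

fun neg :: "'a fm \<Rightarrow> 'a fm" where
  "neg (Atom p) = NAtom p"
| "neg (NAtom p) = Atom p"
| "neg (Conj a b) = Disj (neg a) (neg b)"
| "neg (Disj a b) = Conj (neg a) (neg b)"
| "neg (Box a) = Dia (neg a)"
| "neg (Dia a) = Box (neg a)"
| "neg (Stit a) = DStit (neg a)"
| "neg (DStit a) = Stit (neg a)"

text \<open>Labels are natural numbers. A labelled sequent is a pair (R, G):
  R is the set of relational atoms R_1 x y (as pairs (x,y)), G the set of
  labelled formulas x:phi (as pairs (x,phi)).\<close>
type_synonym 'a sequent = "(nat \<times> nat) set \<times> (nat \<times> 'a fm) set"

definition labels :: "'a sequent \<Rightarrow> nat set" where
  "labels S = fst ` snd S \<union> fst ` fst S \<union> snd ` fst S"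

definition roots :: "'a sequent \<Rightarrow> nat set" where
  "roots S = {x \<in> labels S. \<not> (\<exists>y. (y, x) \<in> fst S)}"

definition CT :: "'a sequent \<Rightarrow> nat \<Rightarrow> nat set" where
  "CT S w = {u \<in> labels S. \<exists>r \<in> roots S. (r, w) \<in> (fst S)\<^sup>* \<and> (r, u) \<in> (fst S)\<^sup>*}"

definition forestlike :: "'a sequent \<Rightarrow> bool" where
  "forestlike S \<longleftrightarrow> (\<forall>u \<in> labels S. \<exists>!r. r \<in> roots S \<and>
      (\<exists>!p. p \<noteq> [] \<and> hd p = r \<and> last p = u \<and>
            (\<forall>i < length p - 1. (p ! i, p ! Suc i) \<in> fst S)))"

definition saturated :: "'a sequent \<Rightarrow> nat \<Rightarrow> bool" where
  "saturated S w \<longleftrightarrow>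
     (\<forall>\<phi>. (w, \<phi>) \<in> snd S \<longrightarrow> (w, neg \<phi>) \<notin> snd S) \<and>
     (\<forall>\<phi> \<psi>. (w, Disj \<phi> \<psi>) \<in> snd S \<longrightarrow> (w, \<phi>) \<in> snd S \<and> (w, \<psi>) \<in> snd S) \<and>
     (\<forall>\<phi> \<psi>. (w, Conj \<phi> \<psi>) \<in> snd S \<longrightarrow> (w, \<phi>) \<in> snd S \<or> (w, \<psi>) \<in> snd S)"

definition box_realized :: "'a sequent \<Rightarrow> nat \<Rightarrow> bool" where
  "box_realized S w \<longleftrightarrow>
     (\<forall>\<phi>. (w, Box \<phi>) \<in> snd S \<longrightarrow> (\<exists>u \<in> labels S. (u, \<phi>) \<in> snd S))"

definition stit_realized :: "'a sequent \<Rightarrow> nat \<Rightarrow> bool" where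
  "stit_realized S w \<longleftrightarrow>
     (\<forall>\<phi>. (w, Stit \<phi>) \<in> snd S \<longrightarrow> (\<exists>u \<in> CT S w. (u, \<phi>) \<in> snd S))"

definition dia_propagated :: "'a sequent \<Rightarrow> nat \<Rightarrow> bool" where
  "dia_propagated S w \<longleftrightarrow>
     (\<forall>\<phi>. (w, Dia \<phi>) \<in> snd S \<longrightarrow> (\<forall>u \<in> labels S. (u, \<phi>) \<in> snd S))"

definition dstit_propagated :: "'a sequent \<Rightarrow> nat \<Rightarrow> bool" where
  "dstit_propagated S w \<longleftrightarrow>
     (\<forall>\<phi>. (w, DStit \<phi>) \<in> snd S \<longrightarrow> (\<forall>u \<in> CT S w. (u, \<phi>) \<in> snd S))"

definition choice_consistent :: "nat \<Rightarrow> 'a sequent \<Rightarrow> bool" where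
  "choice_consistent n S \<longleftrightarrow> card (roots S) \<le> n"

definition stable :: "nat \<Rightarrow> 'a sequent \<Rightarrow> bool" where
  "stable n S \<longleftrightarrow>
     (\<forall>w \<in> labels S. saturated S w \<and> box_realized S w \<and> stit_realized S w \<and>
                     dia_propagated S w \<and> dstit_propagated S w) \<and>
     (n > 0 \<longrightarrow> choice_consistent n S)"

definition closed :: "'a sequent \<Rightarrow> bool" where
  "closed S \<longleftrightarrow> (\<exists>w p. (w, Atom p) \<in> snd S \<and> (w, NAtom p) \<in> snd S)"

definition step3_cond :: "'a sequent \<Rightarrow> bool" where
  "step3_cond S \<longleftrightarrow>
     (\<exists>w \<phi> \<psi>. (w, Disj \<phi> \<psi>) \<in> snd S \<and> ((w, \<phi>) \<notin> snd S \<or> (w, \<psi>) \<notin> snd S)) \<or>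
     (\<exists>w \<phi> \<psi>. (w, Conj \<phi> \<psi>) \<in> snd S \<and> (w, \<phi>) \<notin> snd S \<and> (w, \<psi>) \<notin> snd S)"

definition step4_cond :: "'a sequent \<Rightarrow> bool" where
  "step4_cond S \<longleftrightarrow> (\<exists>w \<phi>. (w, DStit \<phi>) \<in> snd S \<and> (\<exists>u \<in> CT S w. (u, \<phi>) \<notin> snd S))"

definition step5_cond :: "'a sequent \<Rightarrow> bool" where
  "step5_cond S \<longleftrightarrow> (\<exists>w \<phi>. (w, Dia \<phi>) \<in> snd S \<and> (\<exists>u \<in> labels S. (u, \<phi>) \<notin> snd S))"

definition step6_cond :: "'a sequent \<Rightarrow> bool" where
  "step6_cond S \<longleftrightarrow> (\<exists>w \<phi>. (w, Stit \<phi>) \<in> snd S \<and> (\<forall>u \<in> CT S w. (u, \<phi>) \<notin> snd S))"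

definition step7_cond :: "'a sequent \<Rightarrow> bool" where
  "step7_cond S \<longleftrightarrow> (\<exists>w \<phi>. (w, Box \<phi>) \<in> snd S \<and> (\<forall>u \<in> labels S. (u, \<phi>) \<notin> snd S))"

text \<open>prove_call n S S': the computation of Prove_n(S) makes a recursive call
  Prove_n(S') (for some admissible choice of labels / formulas / fresh labels,
  steps tried in order).\<close>
inductive prove_call :: "nat \<Rightarrow> 'a sequent \<Rightarrow> 'a sequent \<Rightarrow> bool" for n where
  step3_disj: "\<lbrakk>\<not> closed (R, G); \<not> stable n (R, G);
     (w, Disj \<phi> \<psi>) \<in> G; (w, \<phi>) \<notin> G \<or> (w, \<psi>) \<notin> G\<rbrakk>
   \<Longrightarrow> prove_call n (R, G) (R, insert (w, \<phi>) (insert (w, \<psi>) G))"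
| step3_conj1: "\<lbrakk>\<not> closed (R, G); \<not> stable n (R, G);
     (w, Conj \<phi> \<psi>) \<in> G; (w, \<phi>) \<notin> G; (w, \<psi>) \<notin> G\<rbrakk>
   \<Longrightarrow> prove_call n (R, G) (R, insert (w, \<phi>) G)"
| step3_conj2: "\<lbrakk>\<not> closed (R, G); \<not> stable n (R, G);
     (w, Conj \<phi> \<psi>) \<in> G; (w, \<phi>) \<notin> G; (w, \<psi>) \<notin> G\<rbrakk>
   \<Longrightarrow> prove_call n (R, G) (R, insert (w, \<psi>) G)"
| step4: "\<lbrakk>\<not> closed (R, G); \<not> stable n (R, G); \<not> step3_cond (R, G);
     (w, DStit \<phi>) \<in> G; u \<in> CT (R, G) w; (u, \<phi>) \<notin> G\<rbrakk>
   \<Longrightarrow> prove_call n (R, G) (R, insert (u, \<phi>) G)"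
| step5: "\<lbrakk>\<not> closed (R, G); \<not> stable n (R, G); \<not> step3_cond (R, G);
     \<not> step4_cond (R, G);
     (w, Dia \<phi>) \<in> G; u \<in> labels (R, G); (u, \<phi>) \<notin> G\<rbrakk>
   \<Longrightarrow> prove_call n (R, G) (R, insert (u, \<phi>) G)"
| step6: "\<lbrakk>\<not> closed (R, G); \<not> stable n (R, G); \<not> step3_cond (R, G);
     \<not> step4_cond (R, G); \<not> step5_cond (R, G);
     (w, Stit \<phi>) \<in> G; \<forall>u \<in> CT (R, G) w. (u, \<phi>) \<notin> G; v \<notin> labels (R, G)\<rbrakk>
   \<Longrightarrow> prove_call n (R, G) (insert (w, v) R, insert (v, \<phi>) G)"
| step7: "\<lbrakk>\<not> closed (R, G); \<not> stable n (R, G); \<not> step3_cond (R, G);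
     \<not> step4_cond (R, G); \<not> step5_cond (R, G); \<not> step6_cond (R, G);
     (w, Box \<phi>) \<in> G; \<forall>u \<in> labels (R, G). (u, \<phi>) \<notin> G; v \<notin> labels (R, G)\<rbrakk>
   \<Longrightarrow> prove_call n (R, G) (R, insert (v, \<phi>) G)"
| step8: "\<lbrakk>n > 0; \<not> closed (R, G); \<not> stable n (R, G); \<not> step3_cond (R, G);
     \<not> step4_cond (R, G); \<not> step5_cond (R, G); \<not> step6_cond (R, G);
     \<not> step7_cond (R, G); \<not> choice_consistent n (R, G);
     inj_on r {0..n}; r ` {0..n} \<subseteq> roots (R, G); k \<le> n - 1; k + 1 \<le> j; j \<le> n\<rbrakk>
   \<Longrightarrow> prove_call n (R, G) (insert (r k, r j) R, G)"

end

(* Along any run of Prove_n from w:phi the sequent stays finite, carries only subformulas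
   of phi, and every label is reachable from a root.  Under this invariant each recursive
   call strictly decreases, lexicographically, (1) the number of subformulas of phi that
   occur nowhere, (2) the number of roots, (3) the number of pairs (root r, subformula chi)
   such that no label below r carries chi, and (4) the number of pairs (label, subformula)
   not yet in the sequent: steps 3-5 decrease (4), step 6 decreases (3), step 7 decreases
   (1) although it creates a root, and step 8 decreases (2). *)

theory Submission
  imports Defs
begin

fun subformulas :: "'a fm \<Rightarrow> 'a fm set" where
  "subformulas (Atom p) = {Atom p}"
| "subformulas (NAtom p) = {NAtom p}"
| "subformulas (Conj a b) = insert (Conj a b) (subformulas a \<union> subformulas b)"
| "subformulas (Disj a b) = insert (Disj a b) (subformulas a \<union> subformulas b)"
| "subformulas (Box a) = insert (Box a) (subformulas a)"
| "subformulas (Dia a) = insert (Dia a) (subformulas a)"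
| "subformulas (Stit a) = insert (Stit a) (subformulas a)"
| "subformulas (DStit a) = insert (DStit a) (subformulas a)"

lemma finite_subformulas: "finite (subformulas \<phi>)"
  by (induct \<phi>) auto

lemma subformulas_refl [simp]: "\<phi> \<in> subformulas \<phi>"
  by (cases \<phi>) auto

lemma subformulas_subset: "\<chi> \<in> subformulas \<phi> \<Longrightarrow> subformulas \<chi> \<subseteq> subformulas \<phi>"
  by (induct \<phi>) auto

lemma labels_pair: "labels (R, G) = fst ` G \<union> fst ` R \<union> snd ` R"
  by (simp add: labels_def)

lemma finite_labels: "finite R \<Longrightarrow> finite G \<Longrightarrow> finite (labels (R, G))"
  by (simp add: labels_pair)

lemma formula_label: "(u, \<chi>) \<in> G \<Longrightarrow> u \<in> labels (R, G)"
  by (force simp: labels_pair)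

lemma labels_insert_formula: "labels (R, insert (u, \<chi>) G) = insert u (labels (R, G))"
  by (auto simp: labels_pair)

lemma labels_insert_edge: "labels (insert (a, b) R, G) = insert a (insert b (labels (R, G)))"
  by (auto simp: labels_pair)

lemma roots_subset_labels: "roots S \<subseteq> labels S"
  by (auto simp: roots_def)

lemma roots_insert_formula:
  "u \<in> labels (R, G) \<Longrightarrow> roots (R, insert (u, \<chi>) G) = roots (R, G)"
  by (simp add: roots_def labels_insert_formula insert_absorb)

lemma roots_insert_child:
  assumes "w \<in> labels (R, G)" and "v \<notin> labels (R, G)"
  shows "roots (insert (w, v) R, insert (v, \<psi>) G) = roots (R, G)"
  using assms by (auto simp: roots_def labels_insert_formula labels_insert_edge)

lemma roots_insert_link:
  assumes "a \<in> labels (R, G)" and "b \<in> labels (R, G)"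
  shows "roots (insert (a, b) R, G) = roots (R, G) - {b}"
  using assms by (auto simp: roots_def labels_insert_edge insert_absorb)

definition rooted :: "'a sequent \<Rightarrow> bool" where
  "rooted S \<longleftrightarrow> (\<forall>u \<in> labels S. \<exists>r \<in> roots S. (r, u) \<in> (fst S)\<^sup>*)"

lemma rooted_insert_formula:
  assumes "rooted (R, G)"
  shows "rooted (R, insert (u, \<chi>) G)"
proof (cases "u \<in> labels (R, G)")
  case True
  then show ?thesis
    using assms by (simp add: rooted_def roots_insert_formula labels_insert_formula insert_absorb)
next
  case False
  then have "u \<in> roots (R, insert (u, \<chi>) G)"
    by (force simp: roots_def labels_insert_formula labels_pair)
  moreover have "roots (R, G) \<subseteq> roots (R, insert (u, \<chi>) G)"
    by (auto simp: roots_def labels_insert_formula)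
  ultimately show ?thesis
    using assms by (fastforce simp: rooted_def labels_insert_formula)
qed

lemma rooted_insert_child:
  assumes rooted: "rooted (R, G)" and w: "w \<in> labels (R, G)" and v: "v \<notin> labels (R, G)"
  shows "rooted (insert (w, v) R, insert (v, \<psi>) G)"
  unfolding rooted_def roots_insert_child[OF w v]
proof
  fix u
  assume "u \<in> labels (insert (w, v) R, insert (v, \<psi>) G)"
  then consider "u = v" | "u \<in> labels (R, G)"
    using w by (auto simp: labels_insert_formula labels_insert_edge)
  then show "\<exists>r \<in> roots (R, G). (r, u) \<in> (fst (insert (w, v) R, insert (v, \<psi>) G))\<^sup>*"
  proof cases
    case 1
    obtain r where "r \<in> roots (R, G)" "(r, w) \<in> R\<^sup>*"
      using rooted w by (auto simp: rooted_def)
    then show ?thesis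
      using 1 by (metis fst_conv insertI1 rtrancl_into_rtrancl rtrancl_mono subset_insertI subsetD)
  next
    case 2
    have "R\<^sup>* \<subseteq> (insert (w, v) R)\<^sup>*"
      by (rule rtrancl_mono) auto
    then show ?thesis
      using 2 rooted by (fastforce simp: rooted_def)
  qed
qed

lemma rooted_link_roots:
  assumes rooted: "rooted (R, G)" and a: "a \<in> roots (R, G)" and b: "b \<in> roots (R, G)"
    and "a \<noteq> b"
  shows "rooted (insert (a, b) R, G)"
proof -
  have labels: "labels (insert (a, b) R, G) = labels (R, G)"
    using a b roots_subset_labels by (auto simp: labels_insert_edge)
  have roots: "roots (insert (a, b) R, G) = roots (R, G) - {b}"
    using a b roots_subset_labels by (metis roots_insert_link subsetD)
  have mono: "R\<^sup>* \<subseteq> (insert (a, b) R)\<^sup>*"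
    by (rule rtrancl_mono) auto
  show ?thesis
    unfolding rooted_def labels roots fst_conv
  proof
    fix u
    assume "u \<in> labels (R, G)"
    then obtain r where r: "r \<in> roots (R, G)" "(r, u) \<in> R\<^sup>*"
      using rooted by (auto simp: rooted_def)
    show "\<exists>r \<in> roots (R, G) - {b}. (r, u) \<in> (insert (a, b) R)\<^sup>*"
    proof (cases "r = b")
      case True
      then have "(a, u) \<in> (insert (a, b) R)\<^sup>*"
        using r(2) mono by (meson converse_rtrancl_into_rtrancl insertI1 subsetD)
      then show ?thesis
        using a \<open>a \<noteq> b\<close> by blast
    next
      case False
      then show ?thesis
        using r mono by blast
    qed
  qed
qed

definition admissible :: "'a fm \<Rightarrow> 'a sequent \<Rightarrow> bool" where
  "admissible \<phi> S \<longleftrightarrow>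
     finite (fst S) \<and> finite (snd S) \<and> snd ` snd S \<subseteq> subformulas \<phi> \<and> rooted S"

lemma admissible_initial: "admissible \<phi> ({}, {(w, \<phi>)})"
  by (auto simp: admissible_def rooted_def roots_def labels_pair)

lemma admissible_subformula:
  "admissible \<phi> (R, G) \<Longrightarrow> (u, \<chi>) \<in> G \<Longrightarrow> \<psi> \<in> subformulas \<chi> \<Longrightarrow> \<psi> \<in> subformulas \<phi>"
  unfolding admissible_def using subformulas_subset by force

definition absent_subformulas :: "'a fm \<Rightarrow> 'a sequent \<Rightarrow> 'a fm set" where
  "absent_subformulas \<phi> S = subformulas \<phi> - snd ` snd S"

definition unrealized :: "'a fm \<Rightarrow> 'a sequent \<Rightarrow> (nat \<times> 'a fm) set" where
  "unrealized \<phi> S = {(r, \<chi>) \<in> roots S \<times> subformulas \<phi>.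
     \<forall>u. (r, u) \<in> (fst S)\<^sup>* \<longrightarrow> (u, \<chi>) \<notin> snd S}"

definition missing :: "'a fm \<Rightarrow> 'a sequent \<Rightarrow> (nat \<times> 'a fm) set" where
  "missing \<phi> S = labels S \<times> subformulas \<phi> - snd S"

definition termination_order :: "'a fm \<Rightarrow> ('a sequent \<times> 'a sequent) set" where
  "termination_order \<phi> = measures
     [\<lambda>S. card (absent_subformulas \<phi> S), \<lambda>S. card (roots S),
      \<lambda>S. card (unrealized \<phi> S), \<lambda>S. card (missing \<phi> S)]"

lemma absent_subformulas_antimono:
  "snd S \<subseteq> snd S' \<Longrightarrow> absent_subformulas \<phi> S' \<subseteq> absent_subformulas \<phi> S"
  unfolding absent_subformulas_def by blast

lemma finite_absent_subformulas: "finite (absent_subformulas \<phi> S)"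
  by (simp add: absent_subformulas_def finite_subformulas)

lemma finite_unrealized: "finite (roots S) \<Longrightarrow> finite (unrealized \<phi> S)"
  using finite_subformulas unfolding unrealized_def
  by (blast intro: finite_subset[OF _ finite_cartesian_product])

lemma unrealized_antimono:
  assumes "roots S' \<subseteq> roots S" and "fst S \<subseteq> fst S'" and "snd S \<subseteq> snd S'"
  shows "unrealized \<phi> S' \<subseteq> unrealized \<phi> S"
proof -
  have "(fst S)\<^sup>* \<subseteq> (fst S')\<^sup>*"
    using assms(2) by (rule rtrancl_mono)
  then show ?thesis
    using assms(1,3) unfolding unrealized_def by blast
qed

lemma finite_roots: "admissible \<phi> S \<Longrightarrow> finite (roots S)"
  by (metis admissible_def finite_labels finite_subset prod.collapse roots_subset_labels)

lemma extend_formulas_step: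
  assumes adm: "admissible \<phi> (R, G)" and grow: "G \<subset> G'"
    and new: "G' \<subseteq> G \<union> labels (R, G) \<times> subformulas \<phi>"
  shows "admissible \<phi> (R, G') \<and> ((R, G'), (R, G)) \<in> termination_order \<phi>"
proof -
  have "fst ` G' \<subseteq> labels (R, G)"
  proof
    fix u
    assume "u \<in> fst ` G'"
    then obtain \<chi> where "(u, \<chi>) \<in> G'"
      by force
    then show "u \<in> labels (R, G)"
      using new formula_label[of u \<chi> G R] by blast
  qed
  then have labels: "labels (R, G') = labels (R, G)"
    using grow unfolding labels_pair by blast
  then have roots: "roots (R, G') = roots (R, G)"
    by (simp add: roots_def)
  have fin_labels: "finite (labels (R, G))"
    using adm by (simp add: admissible_def finite_labels)
  have "finite G'"
    using adm fin_labels finite_subformulas[of \<phi>] finite_subset[OF new]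
    by (simp add: admissible_def)
  moreover have "snd ` G' \<subseteq> subformulas \<phi>"
    using adm new unfolding admissible_def by force
  moreover have "rooted (R, G')"
    using adm by (simp add: admissible_def rooted_def labels roots)
  ultimately have adm': "admissible \<phi> (R, G')"
    using adm by (simp add: admissible_def)
  have "missing \<phi> (R, G') \<subset> missing \<phi> (R, G)"
  proof -
    obtain x where "x \<in> G'" "x \<notin> G"
      using grow by blast
    then have "x \<in> missing \<phi> (R, G) - missing \<phi> (R, G')"
      using new by (auto simp: missing_def)
    moreover have "missing \<phi> (R, G') \<subseteq> missing \<phi> (R, G)"
      using grow by (auto simp: missing_def labels)
    ultimately show ?thesis
      by blast
  qed
  moreover have "finite (missing \<phi> (R, G))"
    using fin_labels finite_subformulas[of \<phi>] by (simp add: missing_def)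
  ultimately have "card (missing \<phi> (R, G')) < card (missing \<phi> (R, G))"
    by (simp add: psubset_card_mono)
  moreover have "card (unrealized \<phi> (R, G')) \<le> card (unrealized \<phi> (R, G))"
    using grow roots adm
    by (intro card_mono finite_unrealized unrealized_antimono finite_roots) auto
  moreover have "card (absent_subformulas \<phi> (R, G')) \<le> card (absent_subformulas \<phi> (R, G))"
    using grow by (intro card_mono finite_absent_subformulas absent_subformulas_antimono) auto
  ultimately show ?thesis
    using adm' by (auto simp: termination_order_def roots)
qed

lemma add_child_step:
  assumes adm: "admissible \<phi> (R, G)" and w: "w \<in> labels (R, G)" and v: "v \<notin> labels (R, G)"
    and \<psi>: "\<psi> \<in> subformulas \<phi>" and unrealized: "\<forall>u \<in> CT (R, G) w. (u, \<psi>) \<notin> G"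
  shows "admissible \<phi> (insert (w, v) R, insert (v, \<psi>) G) \<and>
    ((insert (w, v) R, insert (v, \<psi>) G), (R, G)) \<in> termination_order \<phi>"
    (is "admissible \<phi> ?S \<and> _")
proof -
  have roots: "roots ?S = roots (R, G)"
    using w v by (rule roots_insert_child)
  have adm': "admissible \<phi> ?S"
    using adm \<psi> rooted_insert_child[OF _ w v] by (auto simp: admissible_def)
  obtain r where r: "r \<in> roots (R, G)" "(r, w) \<in> R\<^sup>*"
    using adm w by (auto simp: admissible_def rooted_def)
  have "(r, \<psi>) \<in> unrealized \<phi> (R, G)"
  proof -
    have "(u, \<psi>) \<notin> G" if "(r, u) \<in> R\<^sup>*" for u
    proof
      assume "(u, \<psi>) \<in> G"
      then have "u \<in> CT (R, G) w"
        using r that formula_label by (fastforce simp: CT_def)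
      then show False
        using unrealized \<open>(u, \<psi>) \<in> G\<close> by blast
    qed
    then show ?thesis
      using r(1) \<psi> by (simp add: unrealized_def)
  qed
  moreover have "(r, \<psi>) \<notin> unrealized \<phi> ?S"
  proof -
    have "(r, w) \<in> (insert (w, v) R)\<^sup>*"
      using r(2) rtrancl_mono[of R "insert (w, v) R"] by blast
    then have "(r, v) \<in> (insert (w, v) R)\<^sup>*"
      by (simp add: rtrancl_into_rtrancl)
    then show ?thesis
      by (auto simp: unrealized_def)
  qed
  moreover have "unrealized \<phi> ?S \<subseteq> unrealized \<phi> (R, G)"
    using roots by (intro unrealized_antimono) auto
  ultimately have "card (unrealized \<phi> ?S) < card (unrealized \<phi> (R, G))"
    using adm by (intro psubset_card_mono finite_unrealized finite_roots) blast+
  moreover have "card (absent_subformulas \<phi> ?S) \<le> card (absent_subformulas \<phi> (R, G))"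
    by (intro card_mono finite_absent_subformulas absent_subformulas_antimono) auto
  ultimately show ?thesis
    using adm' by (auto simp: termination_order_def roots)
qed

lemma add_absent_subformula_step:
  assumes adm: "admissible \<phi> (R, G)" and \<psi>: "\<psi> \<in> subformulas \<phi>" and absent: "\<psi> \<notin> snd ` G"
  shows "admissible \<phi> (R, insert (v, \<psi>) G) \<and>
    ((R, insert (v, \<psi>) G), (R, G)) \<in> termination_order \<phi>"
proof -
  have "absent_subformulas \<phi> (R, insert (v, \<psi>) G) \<subset> absent_subformulas \<phi> (R, G)"
    using \<psi> absent by (force simp: absent_subformulas_def)
  then have "card (absent_subformulas \<phi> (R, insert (v, \<psi>) G)) < card (absent_subformulas \<phi> (R, G))"
    by (simp add: psubset_card_mono finite_absent_subformulas)
  moreover have "admissible \<phi> (R, insert (v, \<psi>) G)"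
    using adm \<psi> rooted_insert_formula by (auto simp: admissible_def)
  ultimately show ?thesis
    by (simp add: termination_order_def)
qed

lemma link_roots_step:
  assumes adm: "admissible \<phi> (R, G)" and a: "a \<in> roots (R, G)" and b: "b \<in> roots (R, G)"
    and "a \<noteq> b"
  shows "admissible \<phi> (insert (a, b) R, G) \<and>
    ((insert (a, b) R, G), (R, G)) \<in> termination_order \<phi>"
proof -
  have "roots (insert (a, b) R, G) = roots (R, G) - {b}"
    using a b roots_subset_labels by (metis roots_insert_link subsetD)
  then have "card (roots (insert (a, b) R, G)) < card (roots (R, G))"
    using card_Diff1_less[OF finite_roots[OF adm] b] by simp
  moreover have "absent_subformulas \<phi> (insert (a, b) R, G) = absent_subformulas \<phi> (R, G)"
    by (simp add: absent_subformulas_def)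
  moreover have "admissible \<phi> (insert (a, b) R, G)"
    using adm rooted_link_roots[OF _ a b \<open>a \<noteq> b\<close>] by (auto simp: admissible_def)
  ultimately show ?thesis
    by (simp add: termination_order_def)
qed

lemma prove_call_step:
  assumes "prove_call n S S'" and "admissible \<phi> S"
  shows "admissible \<phi> S' \<and> (S', S) \<in> termination_order \<phi>"
  using assms
proof (induction rule: prove_call.induct)
  case (step3_disj R G w \<chi> \<psi>)
  then have "\<chi> \<in> subformulas \<phi>" "\<psi> \<in> subformulas \<phi>" "w \<in> labels (R, G)"
    by (auto intro: admissible_subformula formula_label)
  with step3_disj show ?case
    by (intro extend_formulas_step) auto
next
  case (step3_conj1 R G w \<chi> \<psi>)
  then have "\<chi> \<in> subformulas \<phi>" "w \<in> labels (R, G)"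
    by (auto intro: admissible_subformula formula_label)
  with step3_conj1 show ?case
    by (intro extend_formulas_step) auto
next
  case (step3_conj2 R G w \<chi> \<psi>)
  then have "\<psi> \<in> subformulas \<phi>" "w \<in> labels (R, G)"
    by (auto intro: admissible_subformula formula_label)
  with step3_conj2 show ?case
    by (intro extend_formulas_step) auto
next
  case (step4 R G w \<chi> u)
  then have "\<chi> \<in> subformulas \<phi>" "u \<in> labels (R, G)"
    by (auto intro: admissible_subformula simp: CT_def)
  with step4 show ?case
    by (intro extend_formulas_step) auto
next
  case (step5 R G w \<chi> u)
  then have "\<chi> \<in> subformulas \<phi>"
    by (auto intro: admissible_subformula)
  with step5 show ?case
    by (intro extend_formulas_step) auto
next
  case (step6 R G w \<chi> v)
  then have "\<chi> \<in> subformulas \<phi>" "w \<in> labels (R, G)"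
    by (auto intro: admissible_subformula formula_label)
  with step6 show ?case
    by (intro add_child_step) auto
next
  case (step7 R G w \<chi> v)
  then have "\<chi> \<in> subformulas \<phi>" "\<chi> \<notin> snd ` G"
    by (auto intro: admissible_subformula formula_label)
  with step7 show ?case
    by (intro add_absent_subformula_step) auto
next
  case (step8 R G r k j)
  then have "r k \<noteq> r j" "r k \<in> roots (R, G)" "r j \<in> roots (R, G)"
    by (auto dest: inj_onD)
  with step8 show ?case
    by (intro link_roots_step) auto
qed

theorem theorem6:
  fixes n :: nat and w :: nat and \<phi> :: "'a fm"
  shows "\<not> (\<exists>f :: nat \<Rightarrow> 'a sequent.
              f 0 = ({}, {(w, \<phi>)}) \<and> (\<forall>i. prove_call n (f i) (f (Suc i))))"
proof
  assume "\<exists>f :: nat \<Rightarrow> 'a sequent.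
              f 0 = ({}, {(w, \<phi>)}) \<and> (\<forall>i. prove_call n (f i) (f (Suc i)))"
  then obtain f :: "nat \<Rightarrow> 'a sequent"
    where start: "f 0 = ({}, {(w, \<phi>)})" and calls: "\<forall>i. prove_call n (f i) (f (Suc i))"
    by blast
  have admissible: "admissible \<phi> (f i)" for i
  proof (induction i)
    case 0
    show ?case
      by (simp add: start admissible_initial)
  next
    case (Suc i)
    then show ?case
      using calls prove_call_step by blast
  qed
  then have "\<forall>i. (f (Suc i), f i) \<in> termination_order \<phi>"
    using calls prove_call_step by blast
  moreover have "wf (termination_order \<phi>)"
    by (simp add: termination_order_def)
  ultimately show False
    using wf_iff_no_infinite_down_chain by blast
qed

end
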